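(* For the weighted linear tensor product problem $S_{\boldsymbol\gamma}=\{S_{d,\boldsymbol\gamma}\}$ described in the context, exponential uniform weak tractability (EXP-UWT) holds if and only if $$\lim_{j\to\infty}\frac{\ln\big(\ln\frac1{\lambda_j}\big)}{\ln(\ln j)}=\infty\quad\text{and}\quad \lim_{j\to\infty}\frac{\ln\big(\ln\frac1{\gamma_j}\big)}{\ln j}=\infty.$$
   Context: Let $H_1$ be a separable infinite-dimensional Hilbert space, $G_1$ a Hilbert space and $S_1:H_1\to G_1$ a compact linear operator. Let $\{(\lambda_j,e_j)\}_{j\in\mathbb N}$ be the eigenpairs of $W_1=S_1^*S_1$, with $\{e_j\}$ an orthonormal basis of $H_1$ and $\lambda_1\ge\lambda_2\ge\cdots\ge0$; assume $\lambda_1=1$, $\lambda_2>0$, and $\lambda_j\to0$. (If $\lambda_j=0$ we set $\ln\frac1{\lambda_j}=\infty$.) Let the weights satisfy $1\ge\gamma_1\ge\gamma_2\ge\cdots>0$. For $\gamma\in(0,1]$ let $H_{1,\gamma}$ be $H_1$ with inner product $\langle f,g\rangle_{H_{1,\gamma}}=\langle f_0,g_0\rangle_{H_1}+\gamma^{-1}\langle f_1,g_1\rangle_{H_1}$, where $f_0$ is the orthogonal projection of $f$ onto $\mathrm{span}\{e_1\}$ and $f_1=f-f_0$. For $d\in\mathbb N$ let $S_{d,\boldsymbol\gamma}=S_1\otimes\cdots\otimes S_1$ act from $H_{d,\boldsymbol\gamma}=H_{1,\gamma_1}\otimes\cdots\otimes H_{1,\gamma_d}$ to $G_d=G_1^{\otimes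 d}$. In the worst case setting with algorithms using $n$ arbitrary (possibly adaptive) continuous linear functionals, the information complexity $n(\varepsilon,S_{d,\boldsymbol\gamma})$ (minimal $n$ with $n$-th minimal worst case error $\le\varepsilon$; initial error is $1$) equals $\big|\{\mathbf j\in\mathbb N^d:\prod_{k=1}^d\lambda_{k,j_k}>\varepsilon^2\}\big|$, where $\lambda_{k,1}=1$ and $\lambda_{k,j}=\gamma_k\lambda_j$ for $j\ge2$. For $s,t>0$, EXP-$(s,t)$-WT means $\lim_{d+\varepsilon^{-1}\to\infty}\frac{\ln n(\varepsilon,S_{d,\boldsymbol\gamma})}{d^t+(\ln\varepsilon^{-1})^s}=0$ (over $d\in\mathbb N$, $\varepsilon\in(0,1)$); EXP-UWT means EXP-$(s,t)$-WT holds for all $s>0$ and $t>0$. *)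

theory Defs
  imports "HOL-Analysis.Analysis" "HOL-Library.FuncSet"
begin

text \<open>Sequences are indexed from 1: lam 1, lam 2, ... and gam 1, gam 2, ...;
  the values at index 0 are irrelevant.\<close>

text \<open>Univariate eigenvalues of the k-th weighted factor:
  lambda_{k,1} = 1, lambda_{k,j} = gamma_k * lambda_j for j >= 2.\<close>
definition wlam :: "(nat \<Rightarrow> real) \<Rightarrow> (nat \<Rightarrow> real) \<Rightarrow> nat \<Rightarrow> nat \<Rightarrow> real" where
  "wlam lam gam k j = (if j = 1 then 1 else gam k * lam j)"

definition info_compl :: "(nat \<Rightarrow> real) \<Rightarrow> (nat \<Rightarrow> real) \<Rightarrow> nat \<Rightarrow> real \<Rightarrow> nat" where
  "info_compl lam gam d eps =
     card {j \<in> {1..d} \<rightarrow>\<^sub>E {1..}. (\<Prod>k\<in>{1..d}. wlam lam gam k (j k)) > eps\<^sup>2}"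

definition EXP_WT :: "(nat \<Rightarrow> real) \<Rightarrow> (nat \<Rightarrow> real) \<Rightarrow> real \<Rightarrow> real \<Rightarrow> bool" where
  "EXP_WT lam gam s t \<longleftrightarrow>
     (\<forall>\<eta>>0. \<exists>R. \<forall>d eps. d \<ge> 1 \<longrightarrow> 0 < eps \<longrightarrow> eps < 1 \<longrightarrow> real d + 1 / eps > R \<longrightarrow>
        \<bar>ln (real (info_compl lam gam d eps)) / (real d powr t + ln (1 / eps) powr s)\<bar> < \<eta>)"

definition EXP_UWT :: "(nat \<Rightarrow> real) \<Rightarrow> (nat \<Rightarrow> real) \<Rightarrow> bool" where
  "EXP_UWT lam gam \<longleftrightarrow> (\<forall>s>0. \<forall>t>0. EXP_WT lam gam s t)"

text \<open>ln(ln(1/lambda_j)) / ln(ln j) as an extended real; if lambda_j = 0 then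
  ln(1/lambda_j) = \<infinity> and the quotient is taken to be \<infinity>.\<close>
definition lam_ratio :: "(nat \<Rightarrow> real) \<Rightarrow> nat \<Rightarrow> ereal" where
  "lam_ratio lam j = (if lam j = 0 then \<infinity> else ereal (ln (ln (1 / lam j)) / ln (ln (real j))))"

end

(* For eps = exp (-x/2), a multi-index counted by n(d, eps) has every factor wlam k (j k) above
   exp (-x). If ln ln (1/gam k) / ln k and ln ln (1/lam j) / ln ln j both eventually exceed B, a
   factor gam k * lam (j k) > exp (-x) forces k <= x^(1/B) + O(1) and j k <= exp (x^(1/B)) + O(1),
   so n(d, eps) <= N^M with ln (N^M) = O(x^(2/B)) uniformly in d; with B = 4/s this is
   O((ln (1/eps))^(s/2)), which gives EXP-(s,t)-WT for all s, t.
   Conversely, d = 1 with eps^2 = gam 1 * lam j / 2 gives n >= j, and d = j with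
   eps^2 = (gam j * lam 2)^j / 2 gives n >= 2^j. If the lam-ratio stays below B infinitely often,
   then there ln (1/eps) <= (ln j)^B, and EXP-(1/(2B),1)-WT would force ln j < 1 + sqrt (ln j);
   if the gam-ratio does, then ln (1/eps) = O(j^(B+1)), and EXP-(1/(2B+2),1/2)-WT would force
   j ln 2 = O(sqrt j). *)

theory Submission
  imports Defs "HOL-Real_Asymp.Real_Asymp"
begin

lemma prod_le_factor:
  fixes f :: "'a \<Rightarrow> 'b::linordered_semidom"
  assumes "finite I" "k \<in> I" "\<And>i. i \<in> I \<Longrightarrow> 0 \<le> f i \<and> f i \<le> 1"
  shows "prod f I \<le> f k"
proof -
  have "prod f I = f k * prod f (I - {k})"
    using assms(1,2) by (simp add: prod.remove)
  also have "\<dots> \<le> f k"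
    using assms by (intro mult_left_le prod_le_1 prod_nonneg) auto
  finally show ?thesis .
qed

lemma card_PiE_prefix_le:
  assumes "1 \<le> N"
  shows "card (\<Pi>\<^sub>E k\<in>{1..d}. if k \<le> M then {1..N} else {1::nat}) \<le> N ^ M"
proof -
  have "card (\<Pi>\<^sub>E k\<in>{1..d}. if k \<le> M then {1..N} else {1::nat})
      = (\<Prod>k\<in>{1..d}. if k \<le> M then N else 1)"
    by (simp add: card_PiE if_distrib cong: if_cong)
  also have "\<dots> = N ^ card ({1..d} \<inter> {..M})"
    by (simp add: prod.If_cases Int_def atMost_def)
  also have "\<dots> \<le> N ^ M"
  proof -
    have "card ({1..d} \<inter> {..M}) \<le> card {1..M}"
      by (intro card_mono) auto
    then show ?thesis
      using assms by (intro power_increasing) auto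
  qed
  finally show ?thesis .
qed

lemma add_mult_add_le:
  fixes a b u :: real
  assumes "0 \<le> a" "0 \<le> b" "0 \<le> u"
  shows "(a + u) * (b + u) \<le> (a + 1) * (b + 1) * (1 + u\<^sup>2)"
proof -
  have "0 \<le> (u - 1)\<^sup>2"
    by simp
  then have "u \<le> 1 + u\<^sup>2"
    using assms(3) by (simp add: power2_diff)
  then have "(a + b) * u \<le> (a + b) * (1 + u\<^sup>2)"
    using assms by (intro mult_left_mono) auto
  moreover have "0 \<le> a * b * u\<^sup>2"
    using assms by simp
  ultimately show ?thesis
    by (simp add: algebra_simps power2_eq_square)
qed

lemma ln_nat_ceiling_add_exp_le:
  fixes c u :: real
  assumes "0 \<le> c" "0 \<le> u"
  shows "0 \<le> ln (real (nat \<lceil>c + exp u\<rceil>))" "ln (real (nat \<lceil>c + exp u\<rceil>)) \<le> ln (c + 2) + u"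
proof -
  define N where "N = real (nat \<lceil>c + exp u\<rceil>)"
  have "1 \<le> exp u"
    using assms(2) by simp
  then have "c \<le> c * exp u"
    using mult_left_mono[of 1 "exp u" c] assms(1) by simp
  moreover have "N \<le> c + 1 + exp u" "exp u \<le> N"
    unfolding N_def using assms(1) \<open>1 \<le> exp u\<close> by linarith+
  moreover have "(c + 2) * exp u = c * exp u + 2 * exp u"
    by (simp add: algebra_simps)
  ultimately have "N \<le> (c + 2) * exp u" "1 \<le> N"
    using \<open>1 \<le> exp u\<close> by linarith+
  then have "ln N \<le> ln ((c + 2) * exp u)"
    by (intro ln_mono) auto
  then show "ln N \<le> ln (c + 2) + u"
    using assms(1) by (simp add: ln_mult)
  show "0 \<le> ln N"
    using \<open>1 \<le> N\<close> by simp
qed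

lemma sqrt_le_half:
  fixes x :: real
  assumes "4 \<le> x"
  shows "sqrt x \<le> x / 2"
proof -
  have "2 \<le> sqrt x"
    using real_sqrt_le_mono[OF assms] by simp
  then have "2 * sqrt x \<le> sqrt x * sqrt x"
    using assms by (intro mult_right_mono) auto
  moreover have "sqrt x * sqrt x = x"
    using assms by simp
  ultimately show ?thesis
    by linarith
qed

lemma ln_inverse_sqrt_half:
  fixes a :: real
  assumes "0 < a"
  shows "ln (1 / sqrt (a / 2)) = (ln 2 + ln (1 / a)) / 2"
  using assms by (simp add: ln_div ln_sqrt field_simps)

lemma le_root_if_ln_ln_ratio_ge:
  fixes g w B x :: real
  assumes g: "0 < g" "g \<le> 1" and w: "1 < w" and B: "0 < B"
    and ratio: "B \<le> ln (ln (1 / g)) / ln w" and gx: "exp (- x) < g"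
  shows "w \<le> x powr (1 / B)"
proof -
  have "B * ln w \<le> ln (ln (1 / g))"
    using ratio w by (simp add: pos_le_divide_eq)
  moreover have "0 < B * ln w"
    using B w by simp
  moreover have "0 \<le> ln (1 / g)"
    using g by simp
  ultimately have "0 < ln (ln (1 / g))"
    by linarith
  then have "1 < ln (1 / g)"
    using \<open>0 \<le> ln (1 / g)\<close> by (cases "ln (1 / g) = 0") auto
  have "w powr B = exp (B * ln w)"
    using w by (simp add: powr_def mult.commute)
  also have "\<dots> \<le> exp (ln (ln (1 / g)))"
    using \<open>B * ln w \<le> ln (ln (1 / g))\<close> by simp
  also have "\<dots> = ln (1 / g)"
    using \<open>1 < ln (1 / g)\<close> by simp
  also have "\<dots> < x"
  proof -
    have "1 / g < exp x"
      using gx g by (simp add: exp_minus field_simps)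
    then show ?thesis
      using ln_strict_mono[of "1 / g" "exp x"] g by simp
  qed
  finally have "w powr B < x" .
  then have "(w powr B) powr (1 / B) \<le> x powr (1 / B)"
    using B by (intro powr_mono2) auto
  then show ?thesis
    using B w by (simp add: powr_powr)
qed

lemma ln_inverse_le_powr_if_ln_ln_ratio_le:
  fixes g w B :: real
  assumes g: "0 < g" "g \<le> 1" and w: "1 < w" and ratio: "ln (ln (1 / g)) / ln w \<le> B"
  shows "ln (1 / g) \<le> w powr B"
proof (cases "g = 1")
  case False
  then have "0 < ln (1 / g)"
    using g by simp
  then have "ln (1 / g) = exp (ln (ln (1 / g)))"
    by simp
  also have "\<dots> \<le> exp (B * ln w)"
    using ratio w by (simp add: divide_le_eq)
  also have "\<dots> = w powr B"
    using w by (simp add: powr_def mult.commute)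
  finally show ?thesis .
qed simp

lemma ln2_add_le_powr:
  fixes x G c B :: real
  assumes "2 \<le> x" "0 \<le> B" "0 \<le> c" "G \<le> x powr B"
  shows "(ln 2 + x * (G + c)) / 2 \<le> (2 + c) / 2 * x powr (B + 1)"
proof -
  define P where "P = x powr (B + 1)"
  have P: "P = x * x powr B"
    using assms(1) by (simp add: P_def powr_add)
  have "1 \<le> x powr B"
    using assms(1,2) by (simp add: ge_one_powr_ge_zero)
  then have "x \<le> P"
    using mult_left_mono[of 1 "x powr B" x] assms(1) unfolding P by simp
  then have "1 \<le> P" "c * x \<le> c * P"
    using assms(1,3) by (auto intro: mult_left_mono)
  moreover have "x * G \<le> P"
    unfolding P using assms(1,4) by (intro mult_left_mono) auto
  ultimately show ?thesis
    using ln_2_less_1 by (simp add: P_def[symmetric] algebra_simps)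
qed

lemma divide_le_if_le_one_plus_sqrt:
  fixes L C D y :: real
  assumes "1 \<le> C" "1 \<le> D" "0 \<le> y" "y \<le> D" "L \<le> C * (1 + sqrt y)"
  shows "L / D \<le> 2 * C / sqrt D"
proof -
  have "1 \<le> sqrt D"
    using assms(2) by simp
  have "L \<le> C * (1 + sqrt y)"
    by (fact assms(5))
  also have "\<dots> \<le> C * (1 + sqrt D)"
    using assms(1,4) by (intro mult_left_mono) auto
  also have "\<dots> \<le> 2 * C * sqrt D"
    using mult_left_mono[OF \<open>1 \<le> sqrt D\<close>, of C] assms(1) by (simp add: algebra_simps)
  finally have "L / D \<le> 2 * C * sqrt D / D"
    using assms(2) by (simp add: divide_right_mono)
  also have "\<dots> = 2 * C / sqrt D"
    using assms(2) by (simp add: divide_simps)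
  finally show ?thesis .
qed

lemma d_powr_plus_ln_powr_large:
  fixes s t T :: real
  assumes "0 < s" "0 < t"
  obtains R where "\<And>d eps. 0 < eps \<Longrightarrow> eps < 1 \<Longrightarrow> R < real d + 1 / eps \<Longrightarrow>
    T < real d powr t + ln (1 / eps) powr s"
proof -
  define T' where "T' = max T 1"
  show thesis
  proof (rule that[of "2 * max (T' powr (1 / t)) (exp (T' powr (1 / s)))"])
    fix d :: nat and eps :: real
    assume eps: "0 < eps" "eps < 1"
      and R: "2 * max (T' powr (1 / t)) (exp (T' powr (1 / s))) < real d + 1 / eps"
    have "T' < real d powr t \<or> T' < ln (1 / eps) powr s"
    proof (cases "T' powr (1 / t) < real d")
      case True
      then have "(T' powr (1 / t)) powr t < real d powr t"
        using assms by (intro powr_less_mono2) auto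
      then show ?thesis
        using assms by (simp add: T'_def powr_powr)
    next
      case False
      then have "exp (T' powr (1 / s)) < 1 / eps"
        using R by linarith
      then have "T' powr (1 / s) < ln (1 / eps)"
        using ln_strict_mono[OF _ exp_gt_zero] by fastforce
      then have "(T' powr (1 / s)) powr s < ln (1 / eps) powr s"
        using assms by (intro powr_less_mono2) auto
      then show ?thesis
        using assms by (simp add: T'_def powr_powr)
    qed
    moreover have "T \<le> T'" "0 \<le> real d powr t" "0 \<le> ln (1 / eps) powr s"
      by (simp_all add: T'_def)
    ultimately show "T < real d powr t + ln (1 / eps) powr s"
      by linarith
  qed
qed

lemma EXP_WT_if_ln_info_compl_le:
  assumes s: "0 < s" and t: "0 < t"
    and ge_1: "\<And>d eps. 0 < eps \<Longrightarrow> eps < 1 \<Longrightarrow> 1 \<le> info_compl lam gam d eps"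
    and le: "\<And>d eps. 0 < eps \<Longrightarrow> eps < 1 \<Longrightarrow>
      ln (info_compl lam gam d eps) \<le> C * (1 + ln (1 / eps) powr (s / 2))"
  shows "EXP_WT lam gam s t"
  unfolding EXP_WT_def
proof (intro allI impI)
  fix \<eta> :: real
  assume "0 < \<eta>"
  define C' where "C' = max C 1"
  obtain R where R: "\<And>d eps. 0 < eps \<Longrightarrow> eps < 1 \<Longrightarrow> R < real d + 1 / eps \<Longrightarrow>
      (2 * C' / \<eta>)\<^sup>2 < real d powr t + ln (1 / eps) powr s"
    using d_powr_plus_ln_powr_large[OF s t] by blast
  have "\<bar>ln (info_compl lam gam d eps) / (real d powr t + ln (1 / eps) powr s)\<bar> < \<eta>"
    if d: "1 \<le> d" and eps: "0 < eps" "eps < 1" "R < real d + 1 / eps" for d eps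
  proof -
    define D where "D = real d powr t + ln (1 / eps) powr s"
    have "1 \<le> real d powr t"
      using d t by (simp add: ge_one_powr_ge_zero)
    then have "1 \<le> D"
      unfolding D_def using powr_ge_zero[of "ln (1 / eps)" s] by linarith
    have "ln (info_compl lam gam d eps) \<le> C * (1 + ln (1 / eps) powr (s / 2))"
      using le[OF eps(1,2)] .
    also have "\<dots> \<le> C' * (1 + ln (1 / eps) powr (s / 2))"
      by (intro mult_right_mono) (auto simp: C'_def)
    also have "ln (1 / eps) powr (s / 2) = sqrt (ln (1 / eps) powr s)"
      using eps by (simp add: powr_half_sqrt_powr)
    finally have "ln (info_compl lam gam d eps) \<le> C' * (1 + sqrt (ln (1 / eps) powr s))" .
    then have "ln (info_compl lam gam d eps) / D \<le> 2 * C' / sqrt D"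
      using \<open>1 \<le> D\<close> by (intro divide_le_if_le_one_plus_sqrt) (auto simp: C'_def D_def)
    also have "\<dots> < \<eta>"
    proof -
      have "2 * C' / \<eta> < sqrt D"
        unfolding D_def using R[OF eps] by (rule real_less_rsqrt)
      then show ?thesis
        using \<open>0 < \<eta>\<close> \<open>1 \<le> D\<close> by (simp add: divide_less_eq mult.commute)
    qed
    finally have "ln (info_compl lam gam d eps) / D < \<eta>" .
    moreover have "0 \<le> ln (info_compl lam gam d eps) / D"
      using ge_1[OF eps(1,2), of d] \<open>1 \<le> D\<close> by simp
    ultimately show ?thesis
      by (simp add: D_def)
  qed
  then show "\<exists>R. \<forall>d eps. 1 \<le> d \<longrightarrow> 0 < eps \<longrightarrow> eps < 1 \<longrightarrow> R < real d + 1 / eps \<longrightarrow>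
      \<bar>ln (info_compl lam gam d eps) / (real d powr t + ln (1 / eps) powr s)\<bar> < \<eta>"
    by blast
qed

lemma EXP_WT_imp_ln_info_compl_less:
  assumes "EXP_WT lam gam s t"
  obtains R where "1 \<le> R" and "\<And>d eps. 1 \<le> d \<Longrightarrow> 0 < eps \<Longrightarrow> eps < 1 \<Longrightarrow> R < real d + 1 / eps \<Longrightarrow>
    ln (info_compl lam gam d eps) < real d powr t + ln (1 / eps) powr s"
proof -
  obtain R where R: "\<And>d eps. 1 \<le> d \<Longrightarrow> 0 < eps \<Longrightarrow> eps < 1 \<Longrightarrow> R < real d + 1 / eps \<Longrightarrow>
      \<bar>ln (info_compl lam gam d eps) / (real d powr t + ln (1 / eps) powr s)\<bar> < 1"
    using assms unfolding EXP_WT_def by (meson zero_less_one)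
  show thesis
  proof (rule that[of "max R 1"])
    fix d :: nat and eps :: real
    assume *: "1 \<le> d" "0 < eps" "eps < 1" "max R 1 < real d + 1 / eps"
    have "0 < real d powr t + ln (1 / eps) powr s"
      using *(1) by (intro add_pos_nonneg) auto
    then show "ln (info_compl lam gam d eps) < real d powr t + ln (1 / eps) powr s"
      using R[OF *(1-3)] *(4) by (simp add: abs_less_iff divide_less_eq)
  qed simp
qed

locale weighted_tensor_problem =
  fixes lam gam :: "nat \<Rightarrow> real"
  assumes lam1: "lam 1 = 1"
    and lam2: "lam 2 > 0"
    and lam_nonneg: "\<And>j. j \<ge> 1 \<Longrightarrow> lam j \<ge> 0"
    and lam_mono: "\<And>i j. 1 \<le> i \<Longrightarrow> i \<le> j \<Longrightarrow> lam j \<le> lam i"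
    and lam_lim: "lam \<longlonglongrightarrow> 0"
    and gam1: "gam 1 \<le> 1"
    and gam_pos: "\<And>j. j \<ge> 1 \<Longrightarrow> gam j > 0"
    and gam_mono: "\<And>i j. 1 \<le> i \<Longrightarrow> i \<le> j \<Longrightarrow> gam j \<le> gam i"
begin

lemma lam_le_1: "j \<ge> 1 \<Longrightarrow> lam j \<le> 1"
  using lam_mono[of 1 j] lam1 by simp

lemma gam_le_1: "j \<ge> 1 \<Longrightarrow> gam j \<le> 1"
  using gam_mono[of 1 j] gam1 by simp

lemma wlam_bounds:
  assumes "1 \<le> k" "1 \<le> j"
  shows "0 \<le> wlam lam gam k j" "wlam lam gam k j \<le> 1"
  using mult_le_one[OF gam_le_1 lam_nonneg lam_le_1] gam_pos[of k] lam_nonneg[of j] assms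
  by (auto simp: wlam_def less_imp_le)

definition large_eigen_indices :: "nat \<Rightarrow> real \<Rightarrow> (nat \<Rightarrow> nat) set" where
  "large_eigen_indices d eps =
     {j \<in> {1..d} \<rightarrow>\<^sub>E {1..}. eps\<^sup>2 < (\<Prod>k\<in>{1..d}. wlam lam gam k (j k))}"

lemma info_compl_eq_card: "info_compl lam gam d eps = card (large_eigen_indices d eps)"
  unfolding info_compl_def large_eigen_indices_def ..

lemma large_eigen_indices_factor_gt:
  assumes j: "j \<in> large_eigen_indices d eps" and k: "k \<in> {1..d}"
  shows "eps\<^sup>2 < wlam lam gam k (j k)"
proof -
  have "\<forall>i\<in>{1..d}. 1 \<le> j i"
    using j by (auto simp: large_eigen_indices_def)
  then have "(\<Prod>i\<in>{1..d}. wlam lam gam i (j i)) \<le> wlam lam gam k (j k)"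
    using k by (intro prod_le_factor) (auto intro: wlam_bounds)
  then show ?thesis
    using j by (simp add: large_eigen_indices_def)
qed

lemma large_eigen_indices_subset:
  assumes c: "0 \<le> c" "c < 1"
    and gam_le: "\<And>k. 1 \<le> k \<Longrightarrow> k \<le> d \<Longrightarrow> c < gam k \<Longrightarrow> k \<le> M"
    and lam_le: "\<And>j. 1 \<le> j \<Longrightarrow> c < lam j \<Longrightarrow> j \<le> N"
  shows "large_eigen_indices d (sqrt c) \<subseteq> (\<Pi>\<^sub>E k\<in>{1..d}. if k \<le> M then {1..N} else {1})"
proof
  fix j
  assume j: "j \<in> large_eigen_indices d (sqrt c)"
  then have j_PiE: "j \<in> {1..d} \<rightarrow>\<^sub>E {1..}"
    by (simp add: large_eigen_indices_def)
  have "1 \<le> N"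
    using lam_le[of 1] lam1 c by simp
  have "j k \<in> (if k \<le> M then {1..N} else {1})" if k: "k \<in> {1..d}" for k
  proof (cases "j k = 1")
    case False
    have jk: "1 \<le> k" "1 \<le> j k"
      using k j_PiE by auto
    have "c < wlam lam gam k (j k)"
      using large_eigen_indices_factor_gt[OF j k] c by simp
    then have "c < gam k * lam (j k)"
      using False by (simp add: wlam_def)
    moreover have "gam k * lam (j k) \<le> gam k"
      using mult_left_le[OF lam_le_1] gam_pos jk by (simp add: less_imp_le)
    moreover have "gam k * lam (j k) \<le> lam (j k)"
      using mult_left_le_one_le[OF lam_nonneg _ gam_le_1] gam_pos jk by (simp add: less_imp_le)
    ultimately show ?thesis
      using gam_le[of k] lam_le[of "j k"] jk k by auto
  qed (use \<open>1 \<le> N\<close> in auto)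
  then show "j \<in> (\<Pi>\<^sub>E k\<in>{1..d}. if k \<le> M then {1..N} else {1})"
    using j_PiE by (auto simp: PiE_iff)
qed

lemma info_compl_le_power:
  assumes "0 \<le> c" "c < 1"
    and "\<And>k. 1 \<le> k \<Longrightarrow> k \<le> d \<Longrightarrow> c < gam k \<Longrightarrow> k \<le> M"
    and "\<And>j. 1 \<le> j \<Longrightarrow> c < lam j \<Longrightarrow> j \<le> N"
  shows "info_compl lam gam d (sqrt c) \<le> N ^ M"
proof -
  have "1 \<le> N"
    using assms(4)[of 1] assms(2) lam1 by simp
  have "info_compl lam gam d (sqrt c)
      \<le> card (\<Pi>\<^sub>E k\<in>{1..d}. if k \<le> M then {1..N} else {1::nat})"
    unfolding info_compl_eq_card
    by (intro card_mono finite_PiE large_eigen_indices_subset assms) auto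
  also have "\<dots> \<le> N ^ M"
    using \<open>1 \<le> N\<close> by (rule card_PiE_prefix_le)
  finally show ?thesis .
qed

lemma finite_large_eigen_indices:
  assumes eps: "0 < eps" "eps < 1"
  shows "finite (large_eigen_indices d eps)"
proof -
  obtain N where N: "\<And>j. N \<le> j \<Longrightarrow> lam j < eps\<^sup>2"
    using order_tendstoD(2)[OF lam_lim, of "eps\<^sup>2"] eps
    by (auto simp: eventually_sequentially)
  have "large_eigen_indices d (sqrt (eps\<^sup>2))
      \<subseteq> (\<Pi>\<^sub>E k\<in>{1..d}. if k \<le> d then {1..N} else {1})"
  proof (rule large_eigen_indices_subset)
    fix j
    assume "eps\<^sup>2 < lam j"
    then show "j \<le> N"
      using N[of j] by (cases "N \<le> j") auto
  qed (use eps in \<open>auto simp: power_less_one_iff\<close>)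
  moreover have "finite (\<Pi>\<^sub>E k\<in>{1..d}. if k \<le> d then {1..N} else {1::nat})"
    by (intro finite_PiE) auto
  ultimately show ?thesis
    using eps by (auto intro: finite_subset)
qed

lemma info_compl_ge_1:
  assumes "0 < eps" "eps < 1"
  shows "1 \<le> info_compl lam gam d eps"
proof -
  have "(\<lambda>k\<in>{1..d}. 1) \<in> large_eigen_indices d eps"
    using assms by (simp add: large_eigen_indices_def wlam_def power_less_one_iff)
  then have "large_eigen_indices d eps \<noteq> {}"
    by blast
  then show ?thesis
    unfolding info_compl_eq_card using finite_large_eigen_indices[OF assms]
    by (simp add: Suc_le_eq card_gt_0_iff)
qed

lemma info_compl_dim_1_ge:
  assumes j: "1 \<le> j" "0 < lam j"
  obtains eps where "0 < eps" "eps < 1" "eps\<^sup>2 \<le> lam j"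
    "ln (1 / eps) = (ln (2 / gam 1) + ln (1 / lam j)) / 2"
    "j \<le> info_compl lam gam 1 eps"
proof -
  define a where "a = gam 1 * lam j"
  define eps where "eps = sqrt (a / 2)"
  have a: "0 < a" "a \<le> lam j"
    unfolding a_def using gam_pos[of 1] gam1 j mult_left_le_one_le[of "lam j" "gam 1"]
    by simp_all
  then have eps: "0 < eps" "eps < 1" "eps\<^sup>2 = a / 2"
    unfolding eps_def using lam_le_1[OF j(1)] by simp_all
  have "(\<Pi>\<^sub>E k\<in>{1..1}. {1..j}) \<subseteq> large_eigen_indices 1 eps"
  proof
    fix i
    assume i: "i \<in> (\<Pi>\<^sub>E k\<in>{1..1::nat}. {1..j})"
    then have "i \<in> {1..1} \<rightarrow>\<^sub>E {1..}"
      by (rule PiE_mono[THEN subsetD, rotated]) auto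
    moreover have "1 \<le> i 1" "i 1 \<le> j"
      using PiE_mem[OF i, of 1] by auto
    then have "a \<le> wlam lam gam 1 (i 1)"
      using a lam_mono[of "i 1" j] gam_pos[of 1] lam_le_1[OF j(1)] by (auto simp: wlam_def a_def)
    ultimately show "i \<in> large_eigen_indices 1 eps"
      using eps(3) a by (simp add: large_eigen_indices_def)
  qed
  from card_mono[OF finite_large_eigen_indices[OF eps(1,2)] this]
  have "j \<le> info_compl lam gam 1 eps"
    by (simp add: info_compl_eq_card card_PiE)
  moreover have "ln 2 + ln (1 / a) = ln (2 / gam 1) + ln (1 / lam j)"
    using gam_pos[of 1] j by (simp add: a_def ln_div ln_mult)
  then have "ln (1 / eps) = (ln (2 / gam 1) + ln (1 / lam j)) / 2"
    using a by (simp add: eps_def ln_inverse_sqrt_half del: ln_div)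
  ultimately show thesis
    using that eps a by simp
qed

lemma info_compl_dim_ge_two_power:
  assumes j: "1 \<le> j"
  obtains eps where "0 < eps" "eps < 1"
    "ln (1 / eps) = (ln 2 + real j * (ln (1 / gam j) + ln (1 / lam 2))) / 2"
    "2 ^ j \<le> info_compl lam gam j eps"
proof -
  define a where "a = gam j * lam 2"
  define eps where "eps = sqrt (a ^ j / 2)"
  have a: "0 < a" "a \<le> 1"
    unfolding a_def using gam_pos[OF j] lam2 mult_le_one[OF gam_le_1[OF j] _ lam_le_1[of 2]]
    by simp_all
  then have aj: "0 < a ^ j" "a ^ j \<le> 1"
    by (simp_all add: power_le_one)
  then have eps: "0 < eps" "eps < 1" "eps\<^sup>2 = a ^ j / 2"
    unfolding eps_def by simp_all
  have "(\<Pi>\<^sub>E k\<in>{1..j}. {1, 2}) \<subseteq> large_eigen_indices j eps"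
  proof
    fix i
    assume i: "i \<in> (\<Pi>\<^sub>E k\<in>{1..j}. {1::nat, 2})"
    then have "i \<in> {1..j} \<rightarrow>\<^sub>E {1..}"
      by (rule PiE_mono[THEN subsetD, rotated]) auto
    moreover have "a \<le> wlam lam gam k (i k)" if k: "k \<in> {1..j}" for k
    proof -
      have "gam j * lam 2 \<le> gam k * lam 2"
        using gam_mono[of k j] k lam2 by (intro mult_right_mono) auto
      moreover have "i k = 1 \<or> i k = 2"
        using PiE_mem[OF i k] by simp
      ultimately show ?thesis
        using a by (auto simp: wlam_def a_def)
    qed
    then have "(\<Prod>k\<in>{1..j}. a) \<le> (\<Prod>k\<in>{1..j}. wlam lam gam k (i k))"
      using a by (intro prod_mono) auto
    ultimately show "i \<in> large_eigen_indices j eps"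
      using eps(3) aj by (simp add: large_eigen_indices_def)
  qed
  from card_mono[OF finite_large_eigen_indices[OF eps(1,2)] this]
  have "2 ^ j \<le> info_compl lam gam j eps"
    by (simp add: info_compl_eq_card card_PiE numeral_2_eq_2)
  moreover have "ln (1 / a) = ln (1 / gam j) + ln (1 / lam 2)"
    using gam_pos[OF j] lam2 by (simp add: a_def ln_div ln_mult)
  then have "ln (1 / eps) = (ln 2 + real j * (ln (1 / gam j) + ln (1 / lam 2))) / 2"
    using aj a by (simp add: eps_def ln_inverse_sqrt_half ln_realpow power_one_over[symmetric] del: ln_div)
  ultimately show thesis
    using that eps by simp
qed

lemma gam_index_le_if_exp_less:
  assumes "0 < B" and k0: "\<And>k. k0 \<le> k \<Longrightarrow> 1 < real k \<and> B \<le> ln (ln (1 / gam k)) / ln (real k)"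
    and k: "1 \<le> k" "exp (- x) < gam k"
  shows "real k \<le> real k0 + x powr (1 / B)"
proof (cases "k0 \<le> k")
  case True
  then have "real k \<le> x powr (1 / B)"
    using k0 k gam_pos[OF k(1)] gam_le_1[OF k(1)] \<open>0 < B\<close> by (intro le_root_if_ln_ln_ratio_ge) auto
  then show ?thesis
    by simp
next
  case False
  then have "real k \<le> real k0"
    by simp
  then show ?thesis
    using powr_ge_zero[of x "1 / B"] by linarith
qed

lemma lam_index_le_if_exp_less:
  assumes "0 < B" and j0: "\<And>j. j0 \<le> j \<Longrightarrow> 1 < ln (real j) \<and> ereal B < lam_ratio lam j"
    and j: "1 \<le> j" "exp (- x) < lam j"
  shows "real j \<le> real j0 + exp (x powr (1 / B))"
proof (cases "j0 \<le> j")
  case True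
  have "0 < lam j"
    using j(2) exp_gt_zero less_trans by blast
  then have "B \<le> ln (ln (1 / lam j)) / ln (ln (real j))"
    using j0[OF True] by (simp add: lam_ratio_def)
  then have "ln (real j) \<le> x powr (1 / B)"
    using j0[OF True] j \<open>0 < lam j\<close> lam_le_1 \<open>0 < B\<close> by (intro le_root_if_ln_ln_ratio_ge) auto
  then have "exp (ln (real j)) \<le> exp (x powr (1 / B))"
    by simp
  then show ?thesis
    using j(1) by simp
next
  case False
  then have "real j \<le> real j0"
    by simp
  then show ?thesis
    using exp_gt_zero[of "x powr (1 / B)"] by linarith
qed

lemma ratio_thresholds:
  assumes lam_fast: "lam_ratio lam \<longlonglongrightarrow> \<infinity>"
    and gam_fast: "filterlim (\<lambda>j. ln (ln (1 / gam j)) / ln (real j)) at_top sequentially"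
  obtains k0 j0 where "\<And>k. k0 \<le> k \<Longrightarrow> 1 < real k \<and> B \<le> ln (ln (1 / gam k)) / ln (real k)"
    "\<And>j. j0 \<le> j \<Longrightarrow> 1 < ln (real j) \<and> ereal B < lam_ratio lam j"
proof -
  have "filterlim (\<lambda>j. ln (real j)) at_top sequentially"
    by real_asymp
  then have "eventually (\<lambda>j. 1 < ln (real j) \<and> ereal B < lam_ratio lam j) sequentially"
    using lam_fast unfolding filterlim_at_top_dense tendsto_PInfty
    by (auto intro: eventually_conj)
  moreover have "eventually (\<lambda>k. 1 < real k \<and> B \<le> ln (ln (1 / gam k)) / ln (real k)) sequentially"
    using gam_fast eventually_gt_at_top[of 1] unfolding filterlim_at_top
    by (auto intro: eventually_conj)
  ultimately show thesis
    using that unfolding eventually_sequentially by blast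
qed

lemma ln_info_compl_le_product:
  assumes "0 < B"
    and k0: "\<And>k. k0 \<le> k \<Longrightarrow> 1 < real k \<and> B \<le> ln (ln (1 / gam k)) / ln (real k)"
    and j0: "\<And>j. j0 \<le> j \<Longrightarrow> 1 < ln (real j) \<and> ereal B < lam_ratio lam j"
    and eps: "0 < eps" "eps < 1"
  shows "ln (info_compl lam gam d eps)
    \<le> (real k0 + 1 + (2 * ln (1 / eps)) powr (1 / B)) * (ln (real j0 + 2) + (2 * ln (1 / eps)) powr (1 / B))"
proof -
  define x where "x = 2 * ln (1 / eps)"
  define u where "u = x powr (1 / B)"
  define M where "M = nat \<lceil>real k0 + u\<rceil>"
  define N where "N = nat \<lceil>real j0 + exp u\<rceil>"
  have "exp (- x) = exp (ln (eps\<^sup>2))"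
    using eps by (simp add: x_def ln_div ln_realpow)
  then have "sqrt (exp (- x)) = eps"
    using eps by simp
  have M: "k \<le> M" if "1 \<le> k" "exp (- x) < gam k" for k
    using gam_index_le_if_exp_less[of B k0 k x, OF \<open>0 < B\<close> k0 that]
    unfolding M_def u_def by linarith
  have N: "j \<le> N" if "1 \<le> j" "exp (- x) < lam j" for j
    using lam_index_le_if_exp_less[of B j0 j x, OF \<open>0 < B\<close> j0 that]
    unfolding N_def u_def by linarith
  have "info_compl lam gam d eps \<le> N ^ M"
    using info_compl_le_power[of "exp (- x)" d M N] M N eps \<open>sqrt (exp (- x)) = eps\<close>
    by (simp add: x_def)
  moreover have "1 \<le> info_compl lam gam d eps"
    using info_compl_ge_1[OF eps] .
  ultimately have "ln (info_compl lam gam d eps) \<le> ln (real N ^ M)"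
    by (intro ln_mono) (simp_all flip: of_nat_power)
  also have "\<dots> = real M * ln (real N)"
    using \<open>1 \<le> info_compl lam gam d eps\<close> \<open>info_compl lam gam d eps \<le> N ^ M\<close>
    by (simp add: ln_realpow)
  also have "\<dots> \<le> (real k0 + 1 + u) * (ln (real j0 + 2) + u)"
  proof (rule mult_mono)
    have "0 \<le> u"
      by (simp add: u_def)
    then show "real M \<le> real k0 + 1 + u" "0 \<le> real k0 + 1 + u"
      unfolding M_def by linarith+
    show "ln (real N) \<le> ln (real j0 + 2) + u" "0 \<le> ln (real N)"
      unfolding N_def using ln_nat_ceiling_add_exp_le[of "real j0" u] \<open>0 \<le> u\<close> by simp_all
  qed
  finally show ?thesis
    unfolding u_def x_def .
qed

lemma EXP_WT_if_ratios_tendsto_infinity: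
  assumes lam_fast: "lam_ratio lam \<longlonglongrightarrow> \<infinity>"
    and gam_fast: "filterlim (\<lambda>j. ln (ln (1 / gam j)) / ln (real j)) at_top sequentially"
    and s: "0 < s" and t: "0 < t"
  shows "EXP_WT lam gam s t"
proof -
  obtain k0 j0 where k0: "\<And>k. k0 \<le> k \<Longrightarrow> 1 < real k \<and> 4 / s \<le> ln (ln (1 / gam k)) / ln (real k)"
    and j0: "\<And>j. j0 \<le> j \<Longrightarrow> 1 < ln (real j) \<and> ereal (4 / s) < lam_ratio lam j"
    using ratio_thresholds[OF lam_fast gam_fast] by blast
  define a where "a = real k0 + 1"
  define b where "b = ln (real j0 + 2)"
  show ?thesis
  proof (rule EXP_WT_if_ln_info_compl_le[OF s t info_compl_ge_1])
    fix d and eps :: real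
    assume eps: "0 < eps" "eps < 1"
    define y where "y = ln (1 / eps)"
    define u where "u = (2 * y) powr (s / 4)"
    have "0 < y"
      using eps by (simp add: y_def)
    have "u\<^sup>2 = (2 * y) powr (s / 2)"
      by (simp add: u_def power2_eq_square powr_add[symmetric])
    also have "\<dots> = 2 powr (s / 2) * y powr (s / 2)"
      using \<open>0 < y\<close> by (simp add: powr_mult)
    finally have u_sq: "u\<^sup>2 = 2 powr (s / 2) * y powr (s / 2)" .
    have "ln (info_compl lam gam d eps) \<le> (a + u) * (b + u)"
      using ln_info_compl_le_product[OF _ k0 j0 eps] s by (simp add: a_def b_def u_def y_def)
    also have "\<dots> \<le> (a + 1) * (b + 1) * (1 + u\<^sup>2)"
      by (intro add_mult_add_le) (simp_all add: a_def b_def u_def)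
    also have "\<dots> \<le> (a + 1) * (b + 1) * ((1 + 2 powr (s / 2)) * (1 + y powr (s / 2)))"
      unfolding u_sq by (intro mult_left_mono) (simp_all add: a_def b_def algebra_simps)
    finally show "ln (info_compl lam gam d eps)
      \<le> (a + 1) * (b + 1) * (1 + 2 powr (s / 2)) * (1 + ln (1 / eps) powr (s / 2))"
      by (simp add: y_def mult.assoc)
  qed
qed

lemma lam_ratio_gt_if_ln_info_compl_small:
  assumes "1 \<le> B"
    and small: "\<And>eps. 0 < eps \<Longrightarrow> eps\<^sup>2 < \<delta> \<Longrightarrow>
      ln (info_compl lam gam 1 eps) < 1 + ln (1 / eps) powr (1 / (2 * B))"
    and j: "4 \<le> ln (real j)" "ln (2 / gam 1) \<le> ln (real j) powr B" "lam j < \<delta>"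
  shows "ereal B < lam_ratio lam j"
proof (rule ccontr)
  assume not_gt: "\<not> ereal B < lam_ratio lam j"
  have "1 \<le> j"
    using j(1) by (cases "j = 0") auto
  have "lam j \<noteq> 0"
    using not_gt by (auto simp: lam_ratio_def)
  then have "0 < lam j"
    using lam_nonneg[OF \<open>1 \<le> j\<close>] by simp
  have ratio: "ln (ln (1 / lam j)) / ln (ln (real j)) \<le> B"
    using not_gt \<open>lam j \<noteq> 0\<close> by (simp add: lam_ratio_def not_less)
  obtain eps where eps: "0 < eps" "eps < 1" "eps\<^sup>2 \<le> lam j"
    "ln (1 / eps) = (ln (2 / gam 1) + ln (1 / lam j)) / 2"
    "j \<le> info_compl lam gam 1 eps"
    using info_compl_dim_1_ge[OF \<open>1 \<le> j\<close> \<open>0 < lam j\<close>] by blast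
  have "1 < ln (real j)"
    using j(1) by linarith
  then have "ln (1 / lam j) \<le> ln (real j) powr B"
    using \<open>0 < lam j\<close> lam_le_1[OF \<open>1 \<le> j\<close>] ratio by (intro ln_inverse_le_powr_if_ln_ln_ratio_le)
  then have "ln (1 / eps) \<le> ln (real j) powr B"
    unfolding eps(4) using j(2) by (simp add: field_simps)
  then have "ln (1 / eps) powr (1 / (2 * B)) \<le> (ln (real j) powr B) powr (1 / (2 * B))"
    using eps(1,2) \<open>1 \<le> B\<close> by (intro powr_mono2) auto
  also have "\<dots> = sqrt (ln (real j))"
  proof -
    have "B * (1 / (2 * B)) = 1 / 2"
      using \<open>1 \<le> B\<close> by simp
    then show ?thesis
      using j(1) by (simp only: powr_powr) (simp add: powr_half_sqrt)
  qed
  finally have "ln (1 / eps) powr (1 / (2 * B)) \<le> sqrt (ln (real j))" .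
  moreover have "ln (real j) \<le> ln (info_compl lam gam 1 eps)"
    using eps(5) \<open>1 \<le> j\<close> by simp
  moreover have "ln (info_compl lam gam 1 eps) < 1 + ln (1 / eps) powr (1 / (2 * B))"
    using small eps(1,3) j(3) by simp
  moreover have "sqrt (ln (real j)) \<le> ln (real j) / 2"
    using sqrt_le_half j(1) by simp
  ultimately show False
    using j(1) by linarith
qed

lemma lam_ratio_eventually_gt:
  assumes "1 \<le> B" and wt: "EXP_WT lam gam (1 / (2 * B)) 1"
  shows "eventually (\<lambda>j. ereal B < lam_ratio lam j) sequentially"
proof -
  obtain R where "1 \<le> R" and R: "\<And>d eps. 1 \<le> d \<Longrightarrow> 0 < eps \<Longrightarrow> eps < 1 \<Longrightarrow> R < real d + 1 / eps \<Longrightarrow>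
      ln (info_compl lam gam d eps) < real d powr 1 + ln (1 / eps) powr (1 / (2 * B))"
    using EXP_WT_imp_ln_info_compl_less[OF wt] by blast
  have small: "ln (info_compl lam gam 1 eps) < 1 + ln (1 / eps) powr (1 / (2 * B))"
    if "0 < eps" "eps\<^sup>2 < (1 / R)\<^sup>2" for eps
  proof -
    have "eps < 1 / R"
      using power_less_imp_less_base[OF that(2)] \<open>1 \<le> R\<close> by simp
    moreover have "1 / R \<le> 1"
      using \<open>1 \<le> R\<close> by simp
    ultimately have "eps < 1"
      by linarith
    have "inverse (1 / R) < inverse eps"
      using \<open>eps < 1 / R\<close> that(1) by (rule less_imp_inverse_less)
    then show ?thesis
      using R[of 1 eps] that(1) \<open>eps < 1\<close> by (simp add: inverse_eq_divide)
  qed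
  have "filterlim (\<lambda>j. ln (real j)) at_top sequentially"
    "filterlim (\<lambda>j. ln (real j) powr B) at_top sequentially"
    using \<open>1 \<le> B\<close> by real_asymp+
  then have "eventually (\<lambda>j. 4 \<le> ln (real j)) sequentially"
    "eventually (\<lambda>j. ln (2 / gam 1) \<le> ln (real j) powr B) sequentially"
    unfolding filterlim_at_top by blast+
  moreover have "eventually (\<lambda>j. lam j < (1 / R)\<^sup>2) sequentially"
    using \<open>1 \<le> R\<close> by (intro order_tendstoD(2)[OF lam_lim]) simp
  ultimately show ?thesis
    by eventually_elim (rule lam_ratio_gt_if_ln_info_compl_small[OF \<open>1 \<le> B\<close> small])
qed

lemma gam_ratio_ge_if_ln_info_compl_small:
  assumes "1 \<le> B" "(B + 1) * s = 1 / 2"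
    and small: "\<And>eps. 0 < eps \<Longrightarrow> eps < 1 \<Longrightarrow>
      ln (info_compl lam gam j eps) < sqrt (real j) + ln (1 / eps) powr s"
    and j: "2 \<le> j" "(1 + ((2 + ln (1 / lam 2)) / 2) powr s) / ln 2 < sqrt (real j)"
  shows "B \<le> ln (ln (1 / gam j)) / ln (real j)"
proof (rule ccontr)
  define K where "K = (2 + ln (1 / lam 2)) / 2"
  assume "\<not> B \<le> ln (ln (1 / gam j)) / ln (real j)"
  then have "ln (1 / gam j) \<le> real j powr B"
    using j(1) gam_pos[of j] gam_le_1[of j] by (intro ln_inverse_le_powr_if_ln_ln_ratio_le) auto
  obtain eps where eps: "0 < eps" "eps < 1"
    "ln (1 / eps) = (ln 2 + real j * (ln (1 / gam j) + ln (1 / lam 2))) / 2"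
    "2 ^ j \<le> info_compl lam gam j eps"
    using info_compl_dim_ge_two_power[of j] j(1) by auto
  have "ln (1 / eps) \<le> K * real j powr (B + 1)"
    unfolding eps(3) K_def using j(1) \<open>1 \<le> B\<close> lam2 lam_le_1[of 2] \<open>ln (1 / gam j) \<le> _\<close>
    by (intro ln2_add_le_powr) auto
  moreover have "0 < s"
    using assms(1,2) zero_less_mult_iff[of "B + 1" s] by simp
  ultimately have "ln (1 / eps) powr s \<le> (K * real j powr (B + 1)) powr s"
    using eps(1,2) by (intro powr_mono2) auto
  also have "\<dots> = K powr s * sqrt (real j)"
    using assms(2) by (simp only: powr_mult powr_powr) (simp add: powr_half_sqrt)
  finally have "ln (1 / eps) powr s \<le> K powr s * sqrt (real j)" .
  have "sqrt (real j) * (sqrt (real j) * ln 2) = ln (2 ^ j)"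
    by (simp add: ln_realpow)
  also have "\<dots> \<le> ln (info_compl lam gam j eps)"
    using eps(4) by (intro ln_mono) (simp_all flip: of_nat_power)
  also have "\<dots> < sqrt (real j) + ln (1 / eps) powr s"
    using small[OF eps(1,2)] .
  also have "\<dots> \<le> sqrt (real j) * (1 + K powr s)"
    using \<open>ln (1 / eps) powr s \<le> K powr s * sqrt (real j)\<close> by (simp add: algebra_simps)
  finally have "sqrt (real j) * ln 2 < 1 + K powr s"
    using j(1) by simp
  then show False
    using j(2) by (simp add: K_def field_simps)
qed

lemma gam_ratio_eventually_ge:
  assumes "1 \<le> B" and wt: "EXP_WT lam gam (1 / (2 * (B + 1))) (1 / 2)"
  shows "eventually (\<lambda>j. B \<le> ln (ln (1 / gam j)) / ln (real j)) sequentially"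
proof -
  define s where "s = 1 / (2 * (B + 1))"
  obtain R where R: "\<And>d eps. 1 \<le> d \<Longrightarrow> 0 < eps \<Longrightarrow> eps < 1 \<Longrightarrow> R < real d + 1 / eps \<Longrightarrow>
      ln (info_compl lam gam d eps) < real d powr (1 / 2) + ln (1 / eps) powr s"
    using EXP_WT_imp_ln_info_compl_less[OF wt] unfolding s_def by blast
  have small: "ln (info_compl lam gam j eps) < sqrt (real j) + ln (1 / eps) powr s"
    if "R < real j" "1 \<le> j" "0 < eps" "eps < 1" for j eps
  proof -
    have "0 < 1 / eps"
      using that(3) by simp
    then have "R < real j + 1 / eps"
      using that(1) by linarith
    then show ?thesis
      using R[of j eps] that by (simp add: powr_half_sqrt)
  qed
  have "filterlim (\<lambda>j. real j) at_top sequentially" "filterlim (\<lambda>j. sqrt (real j)) at_top sequentially"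
    by real_asymp+
  then have "eventually (\<lambda>j. R < real j) sequentially" "eventually (\<lambda>j. 2 \<le> j) sequentially"
    "eventually (\<lambda>j. (1 + ((2 + ln (1 / lam 2)) / 2) powr s) / ln 2 < sqrt (real j)) sequentially"
    unfolding filterlim_at_top_dense by (simp_all add: eventually_ge_at_top)
  then show ?thesis
  proof eventually_elim
    case (elim j)
    have "(B + 1) * s = 1 / 2"
      using \<open>1 \<le> B\<close> by (simp add: s_def)
    with \<open>1 \<le> B\<close> show ?case
      by (rule gam_ratio_ge_if_ln_info_compl_small) (use small elim in auto)
  qed
qed

lemma lam_ratio_tendsto_if_EXP_UWT:
  assumes "EXP_UWT lam gam"
  shows "lam_ratio lam \<longlonglongrightarrow> \<infinity>"
  unfolding tendsto_PInfty
proof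
  fix r
  have "eventually (\<lambda>j. ereal (max r 1) < lam_ratio lam j) sequentially"
    using assms by (intro lam_ratio_eventually_gt) (auto simp: EXP_UWT_def)
  then show "eventually (\<lambda>j. ereal r < lam_ratio lam j) sequentially"
    by (rule eventually_mono) (meson ereal_less_eq(3) max.cobounded1 order.strict_trans1)
qed

lemma gam_ratio_tendsto_if_EXP_UWT:
  assumes "EXP_UWT lam gam"
  shows "filterlim (\<lambda>j. ln (ln (1 / gam j)) / ln (real j)) at_top sequentially"
  unfolding filterlim_at_top
proof
  fix Z
  have "eventually (\<lambda>j. max Z 1 \<le> ln (ln (1 / gam j)) / ln (real j)) sequentially"
    using assms by (intro gam_ratio_eventually_ge) (auto simp: EXP_UWT_def)
  then show "eventually (\<lambda>j. Z \<le> ln (ln (1 / gam j)) / ln (real j)) sequentially"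
    by (rule eventually_mono) simp
qed

end

theorem theorem2:
  fixes lam gam :: "nat \<Rightarrow> real"
  assumes lam1: "lam 1 = 1"
    and lam2: "lam 2 > 0"
    and lam_nonneg: "\<And>j. j \<ge> 1 \<Longrightarrow> lam j \<ge> 0"
    and lam_mono: "\<And>i j. 1 \<le> i \<Longrightarrow> i \<le> j \<Longrightarrow> lam j \<le> lam i"
    and lam_lim: "lam \<longlonglongrightarrow> 0"
    and gam1: "gam 1 \<le> 1"
    and gam_pos: "\<And>j. j \<ge> 1 \<Longrightarrow> gam j > 0"
    and gam_mono: "\<And>i j. 1 \<le> i \<Longrightarrow> i \<le> j \<Longrightarrow> gam j \<le> gam i"
  shows "EXP_UWT lam gam \<longleftrightarrow>
           (lam_ratio lam \<longlonglongrightarrow> \<infinity>) \<and>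
           filterlim (\<lambda>j. ln (ln (1 / gam j)) / ln (real j)) at_top sequentially"
proof -
  interpret weighted_tensor_problem lam gam
    by unfold_locales (fact assms)+
  show ?thesis
    using lam_ratio_tendsto_if_EXP_UWT gam_ratio_tendsto_if_EXP_UWT EXP_WT_if_ratios_tendsto_infinity
    unfolding EXP_UWT_def by blast
qed

end
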